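(* Let $c>0$, let $N$ be a positive integer, and let $\psi$ be an alternating step function of height $c$ and order $N$. Then there is a finite Blaschke product $\omega$ of order $N$ such that $\psi=\frac{2c}{\pi}\operatorname{Arg}\left(\frac{1+\omega}{1-\omega}\right)$ (a.e.) on $\mathbb{T}$.
   Context: $\mathbb{T}$ is the unit circle; $\operatorname{Arg}$ denotes the principal value of the argument. For $c>0$ and $N$ a positive integer, an alternating step function of height $c$ and order $N$ is a function in $L^\infty(\mathbb{T})$ that assumes (a.e.) alternately the values $c$ and $-c$ on $2N$ (nondegenerate) subarcs forming a partition of $\mathbb{T}$. *)

theory Defs
  imports "HOL-Analysis.Analysis"
begin

text \<open>Points of the unit circle are parametrized as cis t, t real; "a.e. on the circle"
  is expressed as "for Lebesgue-almost every real t" (cis is a 2pi-periodic local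
  bi-Lipschitz parametrization, so null sets correspond).\<close>

definition blaschke_factor :: "complex \<Rightarrow> complex \<Rightarrow> complex" where
  "blaschke_factor a z = (z - a) / (1 - cnj a * z)"

definition finite_blaschke_product :: "nat \<Rightarrow> (complex \<Rightarrow> complex) \<Rightarrow> bool" where
  "finite_blaschke_product N \<omega> \<longleftrightarrow>
     (\<exists>lam a. norm lam = 1 \<and> (\<forall>k<N. norm (a k) < 1) \<and>
        \<omega> = (\<lambda>z. lam * (\<Prod>k<N. blaschke_factor (a k) z)))"

text \<open>An alternating step function of height c and order N: there are parameters
  t 0 < t 1 < ... < t (2N) = t 0 + 2 pi (so the arcs cis ` (t j, t (j+1)) are 2N
  nondegenerate arcs partitioning the circle up to endpoints) such that psi takes
  alternately the values c and -c a.e. on consecutive arcs.\<close>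
definition alternating_step_function :: "real \<Rightarrow> nat \<Rightarrow> (complex \<Rightarrow> real) \<Rightarrow> bool" where
  "alternating_step_function c N \<psi> \<longleftrightarrow>
     (\<exists>t :: nat \<Rightarrow> real.
        (\<forall>j<2*N. t j < t (Suc j)) \<and> t (2*N) = t 0 + 2*pi \<and>
        (AE s in lborel. \<forall>j<2*N. t j < s \<and> s < t (Suc j) \<longrightarrow>
              \<psi> (cis s) = (-1) ^ j * c))"

end

theory Submission
  imports Defs "HOL-Computational_Algebra.Fundamental_Theorem_Algebra"
begin

text \<open>Write the partition points as t 0 < ... < t (2N) = t 0 + 2 pi and let a k = cis (t (2k)),
  b k = cis (t (2k+1)) be the end points of the arcs on which psi = c. For a suitable unimodular
  kappa the rational function F z = kappa (prod (z - b j)) / (prod (z - a k)) has the Herglotz form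
  F z = C + sum mu k (a k + z) / (a k - z) with Re C = 0 and all mu k > 0: the residues come from a
  Lagrange interpolation (divided difference) identity, and their signs from the interlacing of the
  a k and the b k. Hence Re F > 0 in the disc, and on the circle F (cis s) = i G s where G is a
  positive combination of the functions cot ((s - t (2k)) / 2). So G decreases strictly from +inf to
  -inf between consecutive poles and vanishes at the b k, and Arg F alternates between pi/2 and
  -pi/2 on consecutive arcs. Finally omega = (F - 1) / (F + 1) is a finite Blaschke product of
  order N: its zeros, the roots of the numerator of F - 1, lie in the disc because Re F > 0 there,
  and |omega| = 1 on the circle.\<close>

section \<open>Divided differences, partial fractions and other algebraic facts\<close>

definition divided_difference :: "('i \<Rightarrow> 'a::field) \<Rightarrow> 'i set \<Rightarrow> ('i \<Rightarrow> 'a) \<Rightarrow> 'a" where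
  "divided_difference a A f = (\<Sum>k\<in>A. f k / (\<Prod>l\<in>A-{k}. (a k - a l)))"

lemma divided_difference_add:
  "divided_difference a A (\<lambda>k. f k + g k) = divided_difference a A f + divided_difference a A g"
  unfolding divided_difference_def by (simp add: sum.distrib add_divide_distrib)

lemma divided_difference_diff:
  "divided_difference a A (\<lambda>k. f k - g k) = divided_difference a A f - divided_difference a A g"
  unfolding divided_difference_def by (simp add: sum_subtractf diff_divide_distrib)

lemma divided_difference_cmult:
  "divided_difference a A (\<lambda>k. c * f k) = c * divided_difference a A f"
  unfolding divided_difference_def by (simp add: sum_distrib_left)

lemma divided_difference_remove_node:
  assumes "finite A" "inj_on a A" "k0 \<in> A"
  shows "divided_difference a A (\<lambda>k. (a k - a k0) * g k) = divided_difference a (A - {k0}) g"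
proof -
  have "(\<Sum>k\<in>A. (a k - a k0) * g k / (\<Prod>l\<in>A-{k}. (a k - a l)))
      = (\<Sum>k\<in>A-{k0}. (a k - a k0) * g k / (\<Prod>l\<in>A-{k}. (a k - a l)))"
    using assms by (simp add: sum.remove)
  also have "\<dots> = (\<Sum>k\<in>A-{k0}. g k / (\<Prod>l\<in>A-{k0}-{k}. (a k - a l)))"
  proof (rule sum.cong[OF refl])
    fix k assume k: "k \<in> A - {k0}"
    have "a k - a k0 \<noteq> 0" using assms k by (auto dest: inj_onD)
    moreover have "A - {k} = insert k0 (A - {k0} - {k})" using assms k by auto
    ultimately show "(a k - a k0) * g k / (\<Prod>l\<in>A-{k}. (a k - a l))
        = g k / (\<Prod>l\<in>A-{k0}-{k}. (a k - a l))"
      using assms by simp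
  qed
  finally show ?thesis unfolding divided_difference_def .
qed

lemma divided_difference_const:
  assumes "finite A" "inj_on a A" "A \<noteq> {}"
  shows "divided_difference a A (\<lambda>_. 1) = (if card A = 1 then 1 else 0)"
  using assms
proof (induction "card A" arbitrary: A rule: less_induct)
  case less
  show ?case
  proof (cases "card A = 1")
    case True
    then obtain x where "A = {x}" by (auto simp: card_Suc_eq)
    thus ?thesis by (simp add: divided_difference_def)
  next
    case False
    have "\<not> card A \<le> 1" using False less.prems by (simp add: card_gt_0_iff le_Suc_eq)
    then obtain k0 k1 where k: "k0 \<in> A" "k1 \<in> A" "k0 \<noteq> k1"
      using card_le_Suc0_iff_eq[OF less.prems(1)] by auto
    \<comment> \<open>a k1 - a k0 = (a k - a k0) - (a k - a k1) reduces to two node sets with one node less\<close>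
    have "(a k1 - a k0) * divided_difference a A (\<lambda>_. 1)
        = divided_difference a A (\<lambda>k. (a k - a k0) * 1 - (a k - a k1) * 1)"
      using divided_difference_cmult[of a A "a k1 - a k0" "\<lambda>_. 1"] by simp
    also have "\<dots> = divided_difference a (A - {k0}) (\<lambda>_. 1) - divided_difference a (A - {k1}) (\<lambda>_. 1)"
      using divided_difference_remove_node[OF less.prems(1,2) k(1), of "\<lambda>_. 1"]
        divided_difference_remove_node[OF less.prems(1,2) k(2), of "\<lambda>_. 1"]
      by (simp only: divided_difference_diff)
    also have "\<dots> = 0"
    proof -
      have "divided_difference a (A - {k}) (\<lambda>_. 1) = (if card A - 1 = 1 then 1 else 0)" if "k \<in> A" for k
      proof -
        have "A - {k} \<noteq> {}" using k by blast
        moreover have "inj_on a (A - {k})" using less.prems(2) by (rule inj_on_subset) auto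
        moreover have "card (A - {k}) < card A" using less.prems(1) that by (rule card_Diff1_less)
        ultimately show ?thesis
          using less.hyps[of "A - {k}"] less.prems(1) that by (simp add: card_Diff_singleton)
      qed
      thus ?thesis using k by simp
    qed
    finally have "(a k1 - a k0) * divided_difference a A (\<lambda>_. 1) = 0" .
    moreover have "a k1 \<noteq> a k0" using less.prems k by (auto dest: inj_onD)
    ultimately show ?thesis using False by simp
  qed
qed

lemma divided_difference_prod_linear:
  assumes "finite B" "finite A" "inj_on a A" "card B < card A"
  shows "divided_difference a A (\<lambda>k. \<Prod>i\<in>B. (a k - b i)) = (if card A = card B + 1 then 1 else 0)"
  using assms
proof (induction B arbitrary: A rule: finite_induct)
  case empty
  thus ?case using divided_difference_const[of A a] by (simp add: card_gt_0_iff)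
next
  case (insert i B)
  then obtain k0 where k0: "k0 \<in> A" by fastforce
  have "(\<lambda>k. \<Prod>i\<in>insert i B. (a k - b i))
      = (\<lambda>k. (a k - a k0) * (\<Prod>i\<in>B. (a k - b i)) + (a k0 - b i) * (\<Prod>i\<in>B. (a k - b i)))"
    using insert by (auto simp: algebra_simps)
  hence "divided_difference a A (\<lambda>k. \<Prod>i\<in>insert i B. (a k - b i))
      = divided_difference a (A - {k0}) (\<lambda>k. \<Prod>i\<in>B. (a k - b i))
        + (a k0 - b i) * divided_difference a A (\<lambda>k. \<Prod>i\<in>B. (a k - b i))"
    using divided_difference_remove_node[OF insert.prems(1,2) k0]
    by (simp add: divided_difference_add divided_difference_cmult)
  also have "divided_difference a A (\<lambda>k. \<Prod>i\<in>B. (a k - b i)) = 0"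
    using insert by simp
  also have "divided_difference a (A - {k0}) (\<lambda>k. \<Prod>i\<in>B. (a k - b i))
      = (if card (A - {k0}) = card B + 1 then 1 else 0)"
    using insert k0 by (intro insert.IH) (auto intro: inj_on_subset)
  finally show ?case using insert k0 by auto
qed

lemma prod_quotient_partial_fractions:
  fixes a :: "'i \<Rightarrow> 'a::field" and b :: "'j \<Rightarrow> 'a"
  assumes "finite A" "inj_on a A" "finite B" "card B = card A" "z \<notin> a ` A"
  shows "(\<Prod>i\<in>B. z - b i) / (\<Prod>l\<in>A. z - a l)
       = 1 + (\<Sum>k\<in>A. (\<Prod>i\<in>B. a k - b i) / (\<Prod>l\<in>A-{k}. a k - a l) / (z - a k))"
proof -
  \<comment> \<open>adjoin z as an extra node and apply the divided-difference identity\<close>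
  define A' where "A' = insert None (Some ` A)"
  define a' where "a' = case_option z a"
  have "inj_on a' A'"
    using assms(2,5) unfolding A'_def a'_def by (auto simp: inj_on_def)
  moreover have "card A' = card A + 1"
    using assms(1) unfolding A'_def by (simp add: card_image)
  ultimately have "divided_difference a' A' (\<lambda>k. \<Prod>i\<in>B. a' k - b i) = 1"
    using assms by (subst divided_difference_prod_linear) (auto simp: A'_def)
  moreover have "A' - {None} = Some ` A" "A' - {Some k} = insert None (Some ` (A - {k}))" for k
    unfolding A'_def by auto
  ultimately have "(\<Prod>i\<in>B. z - b i) / (\<Prod>l\<in>A. z - a l)
      + (\<Sum>k\<in>A. (\<Prod>i\<in>B. a k - b i) / ((a k - z) * (\<Prod>l\<in>A-{k}. a k - a l))) = 1"
    using assms(1) unfolding divided_difference_def A'_def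
    by (simp add: sum.reindex prod.reindex a'_def)
  moreover have "(\<Prod>i\<in>B. a k - b i) / ((a k - z) * (\<Prod>l\<in>A-{k}. a k - a l))
      = - ((\<Prod>i\<in>B. a k - b i) / (\<Prod>l\<in>A-{k}. a k - a l) / (z - a k))" for k
    by (metis divide_divide_eq_left divide_minus_right minus_diff_eq mult.commute)
  ultimately show ?thesis by (simp add: sum_negf algebra_simps)
qed

lemma sgn_prod: "sgn (\<Prod>x\<in>A. f x) = (\<Prod>x\<in>A. sgn (f x :: 'a::linordered_idom))"
  by (induction A rule: infinite_finite_induct) (simp_all add: sgn_mult)

lemma degree_prod_linear_factors:
  fixes x :: "'i \<Rightarrow> 'a::idom"
  shows "degree (\<Prod>k\<in>A. [:- x k, 1:]) = card A"
  by (cases "finite A") (simp_all add: degree_prod_eq_sum_degree)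

lemma lead_coeff_prod_linear_factors:
  fixes x :: "'i \<Rightarrow> 'a::idom"
  shows "lead_coeff (\<Prod>k\<in>A. [:- x k, 1:]) = 1"
  by (simp add: lead_coeff_prod)

lemma cayley_inverse:
  fixes f :: complex
  assumes "f + 1 \<noteq> 0"
  shows "(1 + (f - 1) / (f + 1)) / (1 - (f - 1) / (f + 1)) = f"
proof -
  have "1 + (f - 1) / (f + 1) = 2 * f / (f + 1)" "1 - (f - 1) / (f + 1) = 2 / (f + 1)"
    using assms by (simp_all add: field_simps)
  thus ?thesis using assms by simp
qed

section \<open>The unit circle\<close>

lemma sin_half_pos: "0 < x \<Longrightarrow> x < 2 * pi \<Longrightarrow> sin (x / 2) > 0"
  by (intro sin_gt_zero) auto

lemma cis_sub_cis: "cis x - cis y = 2 * \<i> * of_real (sin ((x - y) / 2)) * cis ((x + y) / 2)"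
proof -
  have "cis x = cis ((x + y) / 2 + (x - y) / 2)" "cis y = cis ((x + y) / 2 - (x - y) / 2)"
    by (simp_all add: field_simps)
  thus ?thesis by (simp add: complex_eq_iff cos_add cos_diff sin_add sin_diff algebra_simps)
qed

lemma cis_add_cis: "cis x + cis y = 2 * of_real (cos ((x - y) / 2)) * cis ((x + y) / 2)"
proof -
  have "cis x = cis ((x + y) / 2 + (x - y) / 2)" "cis y = cis ((x + y) / 2 - (x - y) / 2)"
    by (simp_all add: field_simps)
  thus ?thesis by (simp add: complex_eq_iff cos_add cos_diff sin_add sin_diff algebra_simps)
qed

lemma cis_sum: "cis (\<Sum>x\<in>A. f x) = (\<Prod>x\<in>A. cis (f x))"
  by (induction A rule: infinite_finite_induct) (simp_all add: cis_mult[symmetric])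

lemma prod_cis_sub_cis:
  "(\<Prod>j\<in>A. cis (x j) - cis (y j))
     = (2 * \<i>) ^ card A * of_real (\<Prod>j\<in>A. sin ((x j - y j) / 2)) * cis (\<Sum>j\<in>A. (x j + y j) / 2)"
  by (cases "finite A") (simp_all add: cis_sub_cis prod.distrib cis_sum)

lemma cis_add_div_cis_sub:
  assumes "sin ((y - x) / 2) \<noteq> 0"
  shows "(cis x + cis y) / (cis x - cis y) = \<i> * of_real (cot ((y - x) / 2))"
proof -
  define u where "u = (y - x) / 2"
  have xy: "(x - y) / 2 = - u" unfolding u_def by (simp add: field_simps)
  have "(cis x + cis y) / (cis x - cis y)
      = of_real (cos ((x - y) / 2)) / (\<i> * of_real (sin ((x - y) / 2)))"
    unfolding cis_add_cis cis_sub_cis by simp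
  also have "\<dots> = \<i> * of_real (cot u)"
    unfolding xy using assms[folded u_def] by (simp add: cot_def field_simps)
  finally show ?thesis unfolding u_def .
qed

lemma cot_add_pi: "cot (x + pi) = cot x"
  by (simp add: cot_def)

lemma cot_strict_antimono:
  assumes "0 < x" "x < y" "y < pi"
  shows "cot y < cot x"
proof (rule DERIV_neg_imp_decreasing[OF \<open>x < y\<close>])
  fix u assume "x \<le> u" "u \<le> y"
  hence "sin u > 0" using assms by (intro sin_gt_zero) auto
  thus "\<exists>d. DERIV cot u :> d \<and> d < 0" by (intro exI[of _ "- inverse ((sin u)\<^sup>2)"]) simp
qed

lemma Re_add_div_sub: "Re ((a + z) / (a - z)) = ((norm a)\<^sup>2 - (norm z)\<^sup>2) / (norm (a - z))\<^sup>2"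
proof (cases "a = z")
  case False
  have "Re ((a + z) * cnj (a - z)) = (norm a)\<^sup>2 - (norm z)\<^sup>2"
    by (simp add: cmod_power2) (simp add: algebra_simps power2_eq_square)
  thus ?thesis using False
    by (simp add: complex_div_cnj[of "a + z"] Re_divide_of_real[symmetric] del: of_real_power)
qed simp

lemma Arg_i_times_of_real: "g \<noteq> 0 \<Longrightarrow> Arg (\<i> * of_real g) = sgn g * (pi / 2)"
  using Arg_times_of_real2[of g \<i>] Arg_times_of_real2[of "- g" "- \<i>"]
  by (cases "g > 0") (auto simp: sgn_if)

lemma blaschke_factor_on_circle:
  assumes "norm z = 1"
  shows "blaschke_factor w z = (z - w) / (z * cnj (z - w))"
proof -
  have "z * cnj z = 1" using assms complex_norm_square[of z] by simp
  hence "1 - cnj w * z = z * cnj (z - w)" by (simp add: algebra_simps)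
  thus ?thesis by (simp add: blaschke_factor_def)
qed

lemma diff_on_circle:
  assumes "norm z = 1" "norm a = 1"
  shows "z - a = - a * z * cnj (z - a)"
proof -
  have "z * cnj z = 1" "a * cnj a = 1"
    using assms complex_norm_square[of z] complex_norm_square[of a] by simp_all
  thus ?thesis by (simp add: algebra_simps)
qed

lemma prod_blaschke_factor_on_circle:
  assumes "norm z = 1"
  shows "(\<Prod>k\<in>A. blaschke_factor (w k) z) = (\<Prod>k\<in>A. z - w k) / (z ^ card A * cnj (\<Prod>k\<in>A. z - w k))"
  using assms by (cases "finite A") (simp_all add: blaschke_factor_on_circle prod_dividef prod.distrib cnj_prod)

lemma prod_diff_on_circle:
  assumes "norm z = 1" "\<And>k. k \<in> A \<Longrightarrow> norm (a k) = 1"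
  shows "(\<Prod>k\<in>A. z - a k) = (\<Prod>k\<in>A. - a k) * z ^ card A * cnj (\<Prod>k\<in>A. z - a k)"
proof -
  have "(\<Prod>k\<in>A. z - a k) = (\<Prod>k\<in>A. - a k * z * cnj (z - a k))"
    by (rule prod.cong[OF refl]) (rule diff_on_circle[OF assms])
  also have "\<dots> = (\<Prod>k\<in>A. - a k) * z ^ card A * (\<Prod>k\<in>A. cnj (z - a k))"
    by (simp only: prod.distrib prod_constant)
  also have "(\<Prod>k\<in>A. cnj (z - a k)) = cnj (\<Prod>k\<in>A. z - a k)"
    by (simp only: cnj_prod)
  finally show ?thesis .
qed

section \<open>Almost everywhere modulo 2 pi\<close>

lemma AE_lborel_translate:
  assumes "AE s in lborel. Q (s :: real)"
  shows "AE s in lborel. Q (s + d)"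
proof -
  from assms obtain M where "{s \<in> space lborel. \<not> Q s} \<subseteq> M" "emeasure lborel M = 0" "M \<in> sets lborel"
    by (rule AE_E)
  hence "{s. s - (- d) \<in> M} \<in> null_sets lborel" by (intro null_sets_translation) auto
  moreover have "{s \<in> space lborel. \<not> Q (s + d)} \<subseteq> {s. s - (- d) \<in> M}"
    using \<open>{s \<in> space lborel. \<not> Q s} \<subseteq> M\<close> by auto
  ultimately show ?thesis by (rule AE_I')
qed

lemma exists_shift_into_period:
  fixes s t0 :: real
  obtains n :: int where "t0 \<le> s + 2 * pi * n" "s + 2 * pi * n < t0 + 2 * pi"
proof
  define n where "n = - \<lfloor>(s - t0) / (2 * pi)\<rfloor>"
  have "- n \<le> (s - t0) / (2 * pi)" "(s - t0) / (2 * pi) < - n + 1"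
    unfolding n_def by linarith+
  thus "t0 \<le> s + 2 * pi * n" "s + 2 * pi * n < t0 + 2 * pi"
    using pi_gt_zero by (simp_all add: field_simps)
qed

section \<open>The Herglotz function of a partition of the circle\<close>

locale circle_partition =
  fixes t :: "nat \<Rightarrow> real" and N :: nat
  assumes N_pos: "N > 0"
    and t_step: "\<And>j. j < 2 * N \<Longrightarrow> t j < t (Suc j)"
    and t_period: "t (2 * N) = t 0 + 2 * pi"
begin

lemma t_less: "i < j \<Longrightarrow> j \<le> 2 * N \<Longrightarrow> t i < t j"
proof (induction j)
  case (Suc j)
  thus ?case using t_step[of j] by (cases "i = j") auto
qed simp

lemma t_le: "i \<le> j \<Longrightarrow> j \<le> 2 * N \<Longrightarrow> t i \<le> t j"
  using t_less by (cases "i = j") (auto intro: less_imp_le)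

lemma t_diff_bounds: "i < j \<Longrightarrow> j < 2 * N \<Longrightarrow> 0 < t j - t i \<and> t j - t i < 2 * pi"
  using t_less[of i j] t_less[of j "2 * N"] t_le[of 0 i] t_period by auto

definition \<alpha> :: "nat \<Rightarrow> real" where "\<alpha> k = t (2 * k)"
definition \<beta> :: "nat \<Rightarrow> real" where "\<beta> k = t (2 * k + 1)"
definition a :: "nat \<Rightarrow> complex" where "a k = cis (\<alpha> k)"
definition b :: "nat \<Rightarrow> complex" where "b k = cis (\<beta> k)"

lemma norm_a [simp]: "norm (a k) = 1" and norm_b [simp]: "norm (b k) = 1"
  by (simp_all add: a_def b_def)

lemma sgn_sin_half_t_diff:
  assumes "i < 2 * N" "j < 2 * N" "i \<noteq> j"
  shows "sgn (sin ((t j - t i) / 2)) = (if i < j then 1 else -1)"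
proof (cases "i < j")
  case True
  thus ?thesis using t_diff_bounds[OF True assms(2)] sin_half_pos by simp
next
  case False
  hence "j < i" using assms(3) by simp
  moreover have "sin ((t j - t i) / 2) = - sin ((t i - t j) / 2)"
    by (metis minus_diff_eq minus_divide_left sin_minus)
  ultimately show ?thesis using t_diff_bounds[OF _ assms(1)] sin_half_pos by simp
qed

lemma sgn_sin_half_\<alpha>_\<beta>:
  assumes "j < N" "k < N"
  shows "sgn (sin ((\<alpha> k - \<beta> j) / 2)) = (if j < k then 1 else -1)"
proof -
  have "2 * j + 1 \<noteq> 2 * k" "2 * j + 1 < 2 * k \<longleftrightarrow> j < k" by presburger+
  thus ?thesis using assms sgn_sin_half_t_diff[of "2 * j + 1" "2 * k"] by (simp add: \<alpha>_def \<beta>_def)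
qed

lemma sgn_sin_half_\<alpha>_\<alpha>:
  assumes "l < N" "k < N" "l \<noteq> k"
  shows "sgn (sin ((\<alpha> k - \<alpha> l) / 2)) = (if l < k then 1 else -1)"
  using assms sgn_sin_half_t_diff[of "2 * l" "2 * k"] by (simp add: \<alpha>_def)

lemma a_neq_b:
  assumes "j < N" "k < N"
  shows "a k \<noteq> b j"
proof -
  have "sin ((\<alpha> k - \<beta> j) / 2) \<noteq> 0"
    using sgn_sin_half_\<alpha>_\<beta>[OF assms] by (auto split: if_splits)
  hence "a k - b j \<noteq> 0" unfolding a_def b_def cis_sub_cis by simp
  thus ?thesis by simp
qed

lemma inj_on_a: "inj_on a {..<N}"
proof (rule inj_onI, rule ccontr)
  fix k l assume "k \<in> {..<N}" "l \<in> {..<N}" "a k = a l" "k \<noteq> l"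
  then have "sin ((\<alpha> k - \<alpha> l) / 2) \<noteq> 0"
    using sgn_sin_half_\<alpha>_\<alpha>[of l k] by (auto split: if_splits)
  hence "a k - a l \<noteq> 0" unfolding a_def cis_sub_cis by simp
  with \<open>a k = a l\<close> show False by simp
qed

definition zero_sines :: "nat \<Rightarrow> real" where
  "zero_sines k = (\<Prod>j<N. sin ((\<alpha> k - \<beta> j) / 2))"

definition pole_sines :: "nat \<Rightarrow> real" where
  "pole_sines k = (\<Prod>l\<in>{..<N}-{k}. sin ((\<alpha> k - \<alpha> l) / 2))"

definition \<mu> :: "nat \<Rightarrow> real" where "\<mu> k = - zero_sines k / pole_sines k"

lemma \<mu>_pos: assumes "k < N" shows "\<mu> k > 0"
proof -
  have "sgn (zero_sines k) = (\<Prod>j<N. if j < k then 1 else -1)"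
    unfolding zero_sines_def sgn_prod using assms by (intro prod.cong) (auto simp: sgn_sin_half_\<alpha>_\<beta>)
  also have "\<dots> = (-1) ^ (N - k)"
  proof -
    have "{..<N} \<inter> - {j. j < k} = {k..<N}" by auto
    thus ?thesis by (simp add: prod.If_cases)
  qed
  finally have zero: "sgn (zero_sines k) = (-1) ^ (N - k)" .
  have "sgn (pole_sines k) = (\<Prod>l\<in>{..<N}-{k}. if l < k then 1 else -1)"
    unfolding pole_sines_def sgn_prod using assms by (intro prod.cong) (auto simp: sgn_sin_half_\<alpha>_\<alpha>)
  also have "\<dots> = (-1) ^ (N - Suc k)"
  proof -
    have "({..<N} - {k}) \<inter> - {l. l < k} = {Suc k..<N}" by auto
    thus ?thesis by (simp add: prod.If_cases)
  qed
  finally have pole: "sgn (pole_sines k) = (-1) ^ (N - Suc k)" .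
  have "N - k = Suc (N - Suc k)" using assms by simp
  hence "sgn (\<mu> k) = 1" unfolding \<mu>_def using zero pole by (simp add: sgn_minus)
  thus ?thesis by (simp add: sgn_1_pos)
qed

text \<open>The phase \<kappa> turns every residue of F into a negative real multiple of its pole a k, so
  that the weights \<mu> k of the Herglotz form of F are positive.\<close>

definition \<kappa> :: complex where "\<kappa> = - \<i> * cis (((\<Sum>l<N. \<alpha> l) - (\<Sum>j<N. \<beta> j)) / 2)"

definition residue :: "nat \<Rightarrow> complex" where
  "residue k = \<kappa> * (\<Prod>j<N. a k - b j) / (\<Prod>l\<in>{..<N}-{k}. a k - a l)"

lemma residue_eq: assumes "k < N" shows "residue k = - 2 * a k * of_real (\<mu> k)"
proof -
  define X where "X = (\<Sum>j<N. (\<alpha> k + \<beta> j) / 2)"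
  define Y where "Y = (\<Sum>l\<in>{..<N}-{k}. (\<alpha> k + \<alpha> l) / 2)"
  have card: "card ({..<N} - {k}) = N - 1" using assms by simp
  have "(2 * \<i>) ^ N = 2 * \<i> * (2 * \<i> :: complex) ^ (N - 1)"
    using N_pos by (cases N) simp_all
  hence num: "(\<Prod>j<N. a k - b j) = 2 * \<i> * (2 * \<i>) ^ (N - 1) * of_real (zero_sines k) * cis X"
    unfolding a_def b_def zero_sines_def X_def prod_cis_sub_cis by simp
  have den: "(\<Prod>l\<in>{..<N}-{k}. a k - a l) = (2 * \<i>) ^ (N - 1) * of_real (pole_sines k) * cis Y"
    unfolding a_def pole_sines_def Y_def prod_cis_sub_cis card ..
  have "X = Y + \<alpha> k + ((\<Sum>j<N. \<beta> j) - (\<Sum>l<N. \<alpha> l)) / 2"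
    using assms N_pos unfolding X_def Y_def
    by (simp add: sum.distrib sum_divide_distrib[symmetric] sum_diff1 of_nat_diff field_simps)
  hence "((\<Sum>l<N. \<alpha> l) - (\<Sum>j<N. \<beta> j)) / 2 + X = Y + \<alpha> k" by (simp add: field_simps)
  moreover have "\<kappa> * \<i> = cis (((\<Sum>l<N. \<alpha> l) - (\<Sum>j<N. \<beta> j)) / 2)"
    unfolding \<kappa>_def by (simp add: algebra_simps)
  ultimately have "\<kappa> * \<i> * cis X = cis Y * a k"
    unfolding a_def by (simp add: cis_mult)
  moreover have "pole_sines k \<noteq> 0" using \<mu>_pos[OF assms] unfolding \<mu>_def by auto
  ultimately show ?thesis
    unfolding residue_def num den \<mu>_def by (simp add: field_simps)
qed

definition F :: "complex \<Rightarrow> complex" where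
  "F z = \<kappa> * (\<Prod>j<N. z - b j) / (\<Prod>l<N. z - a l)"

definition C :: complex where "C = \<kappa> + (\<Sum>k<N. of_real (\<mu> k))"

lemma F_b: "j < N \<Longrightarrow> F (b j) = 0"
  unfolding F_def by auto

lemma F_herglotz:
  assumes "\<And>k. k < N \<Longrightarrow> z \<noteq> a k"
  shows "F z = C + (\<Sum>k<N. of_real (\<mu> k) * ((a k + z) / (a k - z)))"
proof -
  have "F z = \<kappa> * (1 + (\<Sum>k<N. (\<Prod>j<N. a k - b j) / (\<Prod>l\<in>{..<N}-{k}. a k - a l) / (z - a k)))"
    unfolding F_def using assms inj_on_a
    by (subst prod_quotient_partial_fractions[symmetric]) auto
  also have "\<dots> = \<kappa> + (\<Sum>k<N. residue k / (z - a k))"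
    unfolding residue_def by (simp add: algebra_simps sum_distrib_left)
  also have "(\<Sum>k<N. residue k / (z - a k)) = (\<Sum>k<N. of_real (\<mu> k) * ((a k + z) / (a k - z)) + of_real (\<mu> k))"
  proof (rule sum.cong[OF refl])
    fix k assume "k \<in> {..<N}"
    hence "k < N" "a k - z \<noteq> 0" "z - a k \<noteq> 0" using assms by auto
    thus "residue k / (z - a k) = of_real (\<mu> k) * ((a k + z) / (a k - z)) + of_real (\<mu> k)"
      by (simp add: residue_eq field_simps)
  qed
  finally show ?thesis unfolding C_def by (simp add: sum.distrib algebra_simps)
qed

lemma Re_F:
  assumes "\<And>k. k < N \<Longrightarrow> z \<noteq> a k"
  shows "Re (F z) = Re C + (\<Sum>k<N. \<mu> k * ((1 - (norm z)\<^sup>2) / (norm (a k - z))\<^sup>2))"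
proof -
  have Re_scale: "Re (of_real r * w) = r * Re w" for r w by simp
  have "Re (F z) = Re (C + (\<Sum>k<N. of_real (\<mu> k) * ((a k + z) / (a k - z))))"
    using F_herglotz[OF assms] by (rule arg_cong)
  thus ?thesis by (simp only: plus_complex.sel Re_sum Re_scale Re_add_div_sub norm_a power_one)
qed

lemma Re_C: "Re C = 0"
proof -
  have "b 0 \<noteq> a k" if "k < N" for k using a_neq_b[of 0 k] N_pos that by simp
  hence "Re (F (b 0)) = Re C" by (simp add: Re_F)
  thus ?thesis using F_b N_pos by simp
qed

lemma Re_F_on_circle: "norm z = 1 \<Longrightarrow> (\<And>k. k < N \<Longrightarrow> z \<noteq> a k) \<Longrightarrow> Re (F z) = 0"
  using Re_F Re_C by simp

lemma norm_less_1_if_F_eq_1: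
  assumes "\<And>k. k < N \<Longrightarrow> w \<noteq> a k" and "F w = 1"
  shows "norm w < 1"
proof (rule ccontr)
  assume "\<not> norm w < 1"
  hence "\<mu> k * ((1 - (norm w)\<^sup>2) / (norm (a k - w))\<^sup>2) \<le> 0" if "k < N" for k
    using \<mu>_pos[OF that] by (intro mult_nonneg_nonpos divide_nonpos_nonneg) (auto simp: abs_square_le_1)
  hence "(\<Sum>k<N. \<mu> k * ((1 - (norm w)\<^sup>2) / (norm (a k - w))\<^sup>2)) \<le> 0"
    by (intro sum_nonpos) simp
  hence "Re (F w) \<le> 0" using Re_F[OF assms(1)] Re_C by simp
  with assms(2) show False by simp
qed

lemma Re_\<kappa>_neg: "Re \<kappa> < 0"
proof -
  have "(\<Sum>k<N. \<mu> k) > 0" using N_pos \<mu>_pos by (intro sum_pos) auto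
  thus ?thesis using Re_C unfolding C_def by simp
qed

lemma norm_\<kappa>: "norm \<kappa> = 1"
  by (simp add: \<kappa>_def norm_mult)

definition P :: "complex poly" where
  "P = smult \<kappa> (\<Prod>j<N. [:- b j, 1:]) - (\<Prod>l<N. [:- a l, 1:])"

lemma poly_P: "poly P z = \<kappa> * (\<Prod>j<N. z - b j) - (\<Prod>l<N. z - a l)"
  by (simp add: P_def poly_prod)

lemma poly_P_eq_F:
  assumes "\<And>k. k < N \<Longrightarrow> z \<noteq> a k"
  shows "poly P z = (F z - 1) * (\<Prod>l<N. z - a l)"
proof -
  have "(\<Prod>l<N. z - a l) \<noteq> 0" using assms by auto
  thus ?thesis unfolding poly_P F_def by (simp add: field_simps)
qed

lemma degree_P: "degree P = N" and lead_coeff_P: "lead_coeff P = \<kappa> - 1"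
proof -
  have "coeff P N = \<kappa> - 1"
    using lead_coeff_prod_linear_factors[of b "{..<N}"] lead_coeff_prod_linear_factors[of a "{..<N}"]
    by (simp add: P_def degree_prod_linear_factors)
  moreover have "\<kappa> \<noteq> 1" using Re_\<kappa>_neg by auto
  ultimately have "N \<le> degree P" by (intro le_degree) simp
  moreover have "degree P \<le> N"
    unfolding P_def
    by (intro degree_diff_le order.trans[OF degree_smult_le]) (simp_all add: degree_prod_linear_factors)
  ultimately show "degree P = N" by simp
  with \<open>coeff P N = \<kappa> - 1\<close> show "lead_coeff P = \<kappa> - 1" by simp
qed

lemma norm_root_P_less_1:
  assumes "poly P w = 0"
  shows "norm w < 1"
proof (rule norm_less_1_if_F_eq_1)
  show w_not_pole: "w \<noteq> a k" if "k < N" for k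
  proof
    assume "w = a k"
    hence "poly P w = \<kappa> * (\<Prod>j<N. a k - b j)" using that by (simp add: poly_P) (metis lessThan_iff)
    moreover have "\<kappa> \<noteq> 0" using norm_\<kappa> by auto
    ultimately show False using assms a_neq_b[of _ k] that by auto
  qed
  have "(\<Prod>l<N. w - a l) \<noteq> 0" using w_not_pole by auto
  thus "F w = 1" using assms poly_P_eq_F[OF w_not_pole] by simp
qed

lemma P_factorization:
  obtains c w where "c \<noteq> 0" "\<And>i. i < N \<Longrightarrow> norm (w i) < 1" "\<And>z. poly P z = c * (\<Prod>i<N. z - w i)"
proof -
  obtain w where P_factors: "smult (lead_coeff P) (\<Prod>i<N. [:- w i, 1:]) = P"
    using complex_poly_decompose'[of P] unfolding degree_P by blast
  have poly: "poly P z = lead_coeff P * (\<Prod>i<N. z - w i)" for z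
    by (subst P_factors[symmetric]) (simp add: poly_prod)
  moreover have "lead_coeff P \<noteq> 0" using Re_\<kappa>_neg unfolding lead_coeff_P by auto
  moreover have "norm (w i) < 1" if "i < N" for i
    using that by (intro norm_root_P_less_1) (auto simp: poly)
  ultimately show ?thesis using that by blast
qed

lemma blaschke_eq_cayley_F:
  assumes "c \<noteq> 0" "\<And>z. poly P z = c * (\<Prod>i<N. z - w i)"
    and "norm z = 1" "\<And>k. k < N \<Longrightarrow> z \<noteq> a k"
  shows "- (c / cnj c) / (\<Prod>k<N. - a k) * (\<Prod>k<N. blaschke_factor (w k) z) = (F z - 1) / (F z + 1)"
proof -
  define p where "p = (\<Prod>k<N. - a k)"
  define Q where "Q = (\<Prod>k<N. z - w k)"
  define V where "V = (\<Prod>l<N. z - a l)"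
  define W where "W = cnj V"
  have "p \<noteq> 0" "W \<noteq> 0" "z \<noteq> 0" using assms(3,4) unfolding p_def W_def V_def by (auto simp: a_def)
  have "Re (F z) = 0" using assms(3,4) by (rule Re_F_on_circle)
  hence "F z + 1 \<noteq> 0" "F z - 1 \<noteq> 0" and cnj_F: "cnj (F z) = - F z" by (auto simp: complex_eq_iff)
  have "V = p * z ^ card {..<N} * W"
    unfolding p_def V_def W_def by (rule prod_diff_on_circle) (simp_all add: assms(3))
  hence V_circle: "V = p * z ^ N * W" by (simp only: card_lessThan)
  have PQ: "c * Q = (F z - 1) * V"
    using poly_P_eq_F[OF assms(4)] assms(2)[of z] unfolding Q_def V_def by simp
  hence "cnj (c * Q) = cnj ((F z - 1) * V)" by (rule arg_cong)
  hence cnj_PQ: "cnj c * cnj Q = (- F z - 1) * W" using cnj_F unfolding W_def by simp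
  have "Q \<noteq> 0"
    using PQ V_circle \<open>c \<noteq> 0\<close> \<open>F z - 1 \<noteq> 0\<close> \<open>W \<noteq> 0\<close> \<open>z \<noteq> 0\<close> \<open>p \<noteq> 0\<close> by auto
  have "(c * Q) * - (F z + 1) = p * (F z - 1) * z ^ N * (cnj c * cnj Q)"
    unfolding PQ cnj_PQ V_circle by (simp add: algebra_simps)
  hence "Q * (c * - (F z + 1)) = p * cnj c * (F z - 1) * (z ^ N * cnj Q)"
    by (simp add: algebra_simps)
  hence "Q / (z ^ N * cnj Q) = p * cnj c * (F z - 1) / (c * - (F z + 1))"
    using \<open>Q \<noteq> 0\<close> \<open>z \<noteq> 0\<close> \<open>c \<noteq> 0\<close> \<open>F z + 1 \<noteq> 0\<close>
    by (subst frac_eq_eq) (auto simp: add_eq_0_iff)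
  also have "\<dots> = (p * cnj c / c) * ((F z - 1) / - (F z + 1))"
    by (rule times_divide_times_eq[symmetric])
  finally have ratio: "Q / (z ^ N * cnj Q) = (p * cnj c / c) * ((F z - 1) / - (F z + 1))" .
  have "- (c / cnj c) / p * (p * cnj c / c) = -1"
    using \<open>c \<noteq> 0\<close> \<open>p \<noteq> 0\<close> by (simp add: field_simps)
  with ratio show ?thesis
    unfolding prod_blaschke_factor_on_circle[OF assms(3)] card_lessThan Q_def[symmetric] p_def[symmetric]
    by (simp only: mult.assoc[symmetric] divide_minus_right mult_minus_left mult_1 minus_minus)
qed

lemma exists_blaschke_product_cayley_F:
  "\<exists>\<omega>. finite_blaschke_product N \<omega> \<and>
     (\<forall>z. norm z = 1 \<longrightarrow> (\<forall>k<N. z \<noteq> a k) \<longrightarrow> (1 + \<omega> z) / (1 - \<omega> z) = F z)"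
proof -
  obtain c w where "c \<noteq> 0" "\<And>i. i < N \<Longrightarrow> norm (w i) < 1" and P: "\<And>z. poly P z = c * (\<Prod>i<N. z - w i)"
    using P_factorization by blast
  define \<omega> where "\<omega> z = - (c / cnj c) / (\<Prod>k<N. - a k) * (\<Prod>k<N. blaschke_factor (w k) z)" for z
  have "norm (- (c / cnj c) / (\<Prod>k<N. - a k)) = 1"
    using \<open>c \<noteq> 0\<close> by (simp add: norm_divide norm_mult prod_norm[symmetric] a_def)
  hence "finite_blaschke_product N \<omega>"
    unfolding finite_blaschke_product_def \<omega>_def using \<open>\<And>i. i < N \<Longrightarrow> norm (w i) < 1\<close> by blast
  moreover have "(1 + \<omega> z) / (1 - \<omega> z) = F z" if "norm z = 1" "\<forall>k<N. z \<noteq> a k" for z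
  proof -
    have "Re (F z) = 0" using that by (intro Re_F_on_circle) auto
    hence "F z + 1 \<noteq> 0" by (auto simp: complex_eq_iff)
    moreover have "\<omega> z = (F z - 1) / (F z + 1)"
      unfolding \<omega>_def using \<open>c \<noteq> 0\<close> P that by (intro blaschke_eq_cayley_F) auto
    ultimately show ?thesis by (simp add: cayley_inverse)
  qed
  ultimately show ?thesis by blast
qed

lemma cis_neq_a: "sin ((s - \<alpha> k) / 2) \<noteq> 0 \<Longrightarrow> cis s \<noteq> a k"
  unfolding a_def using cis_sub_cis[of s "\<alpha> k"] by auto

definition G :: "real \<Rightarrow> real" where
  "G s = Im C + (\<Sum>k<N. \<mu> k * cot ((s - \<alpha> k) / 2))"

lemma F_cis:
  assumes "\<And>k. k < N \<Longrightarrow> sin ((s - \<alpha> k) / 2) \<noteq> 0"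
  shows "F (cis s) = \<i> * of_real (G s)"
proof -
  have "F (cis s) = C + (\<Sum>k<N. of_real (\<mu> k) * (\<i> * of_real (cot ((s - \<alpha> k) / 2))))"
    using assms cis_neq_a by (simp add: F_herglotz a_def cis_add_div_cis_sub)
  also have "C = \<i> * of_real (Im C)" using Re_C by (simp add: complex_eq_iff)
  finally show ?thesis unfolding G_def by (simp add: sum_distrib_left algebra_simps)
qed

text \<open>On the arc from a k to a (k+1), the angle (s - \<alpha> l)/2 lies in (0, pi) for l \<le> k and
  in (-pi, 0) for l > k, i.e.\ after adding the shift below it always lies in (0, pi).\<close>

definition arc_shift :: "nat \<Rightarrow> nat \<Rightarrow> real" where
  "arc_shift k l = (if l \<le> k then 0 else pi)"

lemma arc_angle_bounds:
  assumes "k < N" "t (2 * k) < s" "s < t (2 * k + 2)" "l < N"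
  shows "0 < (s - \<alpha> l) / 2 + arc_shift k l \<and> (s - \<alpha> l) / 2 + arc_shift k l < pi"
proof (cases "l \<le> k")
  case True
  have "t (2 * l) \<le> t (2 * k)" "t (2 * k + 2) \<le> t (2 * N)" "t 0 \<le> t (2 * l)"
    using True assms by (auto intro: t_le)
  thus ?thesis using True assms t_period by (auto simp: \<alpha>_def arc_shift_def)
next
  case False
  have "t (2 * k + 2) \<le> t (2 * l)" "t (2 * l) < t (2 * N)" "t 0 \<le> t (2 * k)"
    using False assms by (auto intro: t_le t_less)
  thus ?thesis using False assms t_period unfolding \<alpha>_def arc_shift_def by (simp add: field_simps)
qed

lemma arc_sin_nonzero:
  assumes "k < N" "t (2 * k) < s" "s < t (2 * k + 2)" "l < N"
  shows "sin ((s - \<alpha> l) / 2) \<noteq> 0"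
proof -
  have "sin ((s - \<alpha> l) / 2 + arc_shift k l) > 0"
    using arc_angle_bounds[OF assms] by (intro sin_gt_zero) auto
  thus ?thesis by (auto simp: arc_shift_def split: if_splits)
qed

lemma G_strict_antimono_on_arc:
  assumes "k < N" "t (2 * k) < s1" "s1 < s2" "s2 < t (2 * k + 2)"
  shows "G s2 < G s1"
proof -
  have "\<mu> l * cot ((s2 - \<alpha> l) / 2) < \<mu> l * cot ((s1 - \<alpha> l) / 2)" if "l < N" for l
  proof -
    have "cot ((s2 - \<alpha> l) / 2 + arc_shift k l) < cot ((s1 - \<alpha> l) / 2 + arc_shift k l)"
      using arc_angle_bounds[OF assms(1,2) _ that] arc_angle_bounds[OF assms(1) _ assms(4) that]
        assms by (intro cot_strict_antimono) (auto simp: divide_strict_right_mono)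
    hence "cot ((s2 - \<alpha> l) / 2) < cot ((s1 - \<alpha> l) / 2)"
      by (simp add: arc_shift_def cot_add_pi split: if_splits)
    thus ?thesis using \<mu>_pos[OF that] by simp
  qed
  hence "(\<Sum>l<N. \<mu> l * cot ((s2 - \<alpha> l) / 2)) < (\<Sum>l<N. \<mu> l * cot ((s1 - \<alpha> l) / 2))"
    using N_pos by (intro sum_strict_mono) auto
  thus ?thesis unfolding G_def by simp
qed

lemma \<beta>_in_arc: "k < N \<Longrightarrow> t (2 * k) < \<beta> k \<and> \<beta> k < t (2 * k + 2)"
  unfolding \<beta>_def by (auto intro: t_less)

lemma G_\<beta>: assumes "k < N" shows "G (\<beta> k) = 0"
proof -
  have "F (cis (\<beta> k)) = \<i> * of_real (G (\<beta> k))"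
    using \<beta>_in_arc[OF assms] by (intro F_cis arc_sin_nonzero[OF assms]) auto
  thus ?thesis using F_b[OF assms] by (simp add: b_def)
qed

lemma pole_interval_of_arc:
  assumes "j < 2 * N" "t j < s" "s < t (Suc j)"
  shows "j div 2 < N" "t (2 * (j div 2)) < s" "s < t (2 * (j div 2) + 2)"
proof -
  show "j div 2 < N" using assms(1) by simp
  hence "t (Suc j) \<le> t (2 * (j div 2) + 2)" by (intro t_le) auto
  moreover have "t (2 * (j div 2)) \<le> t j" using assms(1) by (intro t_le) auto
  ultimately show "t (2 * (j div 2)) < s" "s < t (2 * (j div 2) + 2)" using assms(2,3) by auto
qed

lemma sgn_G_on_arc:
  assumes "j < 2 * N" "t j < s" "s < t (Suc j)"
  shows "sgn (G s) = (-1) ^ j"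
proof -
  define k where "k = j div 2"
  have k: "k < N" "t (2 * k) < s" "s < t (2 * k + 2)"
    using pole_interval_of_arc[OF assms] unfolding k_def by auto
  have \<beta>k: "t (2 * k) < \<beta> k" "\<beta> k < t (2 * k + 2)" using \<beta>_in_arc[OF \<open>k < N\<close>] by auto
  show ?thesis
  proof (cases "even j")
    case True
    hence "s < \<beta> k" using assms(3) unfolding k_def \<beta>_def by (metis Suc_eq_plus1 dvd_mult_div_cancel)
    hence "G (\<beta> k) < G s" using k \<beta>k by (intro G_strict_antimono_on_arc) auto
    thus ?thesis using True G_\<beta>[OF \<open>k < N\<close>] by simp
  next
    case False
    hence "\<beta> k < s" using assms(2) unfolding k_def \<beta>_def by (metis odd_two_times_div_two_succ)
    hence "G s < G (\<beta> k)" using k \<beta>k by (intro G_strict_antimono_on_arc) auto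
    thus ?thesis using False G_\<beta>[OF \<open>k < N\<close>] by simp
  qed
qed

lemma exists_blaschke_product_Arg:
  "\<exists>\<omega>. finite_blaschke_product N \<omega> \<and>
     (\<forall>s j. j < 2 * N \<longrightarrow> t j < s \<longrightarrow> s < t (Suc j) \<longrightarrow>
        Arg ((1 + \<omega> (cis s)) / (1 - \<omega> (cis s))) = (-1) ^ j * (pi / 2))"
proof -
  obtain \<omega> where \<omega>: "finite_blaschke_product N \<omega>"
    "\<And>z. norm z = 1 \<Longrightarrow> \<forall>k<N. z \<noteq> a k \<Longrightarrow> (1 + \<omega> z) / (1 - \<omega> z) = F z"
    using exists_blaschke_product_cayley_F by blast
  have "Arg ((1 + \<omega> (cis s)) / (1 - \<omega> (cis s))) = (-1) ^ j * (pi / 2)"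
    if "j < 2 * N" "t j < s" "s < t (Suc j)" for s j
  proof -
    have sin: "sin ((s - \<alpha> l) / 2) \<noteq> 0" if "l < N" for l
      using arc_sin_nonzero pole_interval_of_arc[OF \<open>j < 2 * N\<close> \<open>t j < s\<close> \<open>s < t (Suc j)\<close>] that
      by blast
    have "G s \<noteq> 0" using sgn_G_on_arc[OF that] by (auto simp: sgn_0_0)
    thus ?thesis using \<omega>(2)[of "cis s"] cis_neq_a[OF sin] F_cis[OF sin] sgn_G_on_arc[OF that]
      by (simp add: Arg_i_times_of_real)
  qed
  thus ?thesis using \<omega>(1) by blast
qed

lemma exists_arc:
  assumes "t 0 < x" "x < t (2 * N)" "\<And>j. j \<le> 2 * N \<Longrightarrow> x \<noteq> t j"
  shows "\<exists>j<2 * N. t j < x \<and> x < t (Suc j)"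
proof -
  have "\<exists>j<M. t j < x \<and> x < t (Suc j)" if "M \<le> 2 * N" "x < t M" for M
    using that
  proof (induction M)
    case (Suc M)
    show ?case
    proof (cases "x < t M")
      case True
      with Suc show ?thesis by (metis Suc_leD less_SucI)
    next
      case False
      hence "t M < x" using assms(3)[of M] Suc.prems by force
      with Suc.prems show ?thesis by auto
    qed
  qed (use assms(1) in simp)
  thus ?thesis using assms(2) by blast
qed

lemma AE_in_arc:
  assumes "AE s in lborel. Q s"
  shows "AE s in lborel. \<exists>s' j. j < 2 * N \<and> t j < s' \<and> s' < t (Suc j) \<and> cis s' = cis s \<and> Q s'"
proof -
  have "AE s in lborel. \<forall>n::int. Q (s + 2 * pi * n)"
    unfolding AE_all_countable by (intro allI AE_lborel_translate assms)
  moreover have "AE s in lborel. s \<notin> (\<lambda>(n::int, j). t j - 2 * pi * n) ` (UNIV \<times> {..2 * N})"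
    by (intro AE_not_in countable_imp_null_set_lborel) auto
  ultimately show ?thesis
  proof eventually_elim
    case (elim s)
    obtain n :: int where n: "t 0 \<le> s + 2 * pi * n" "s + 2 * pi * n < t 0 + 2 * pi"
      by (rule exists_shift_into_period)
    have "s + 2 * pi * n \<noteq> t j" if "j \<le> 2 * N" for j
      using elim(2) that by (auto simp: algebra_simps image_iff)
    moreover from this[of 0] have "t 0 < s + 2 * pi * n" using n by auto
    ultimately obtain j where "j < 2 * N" "t j < s + 2 * pi * n" "s + 2 * pi * n < t (Suc j)"
      using exists_arc[of "s + 2 * pi * n"] n t_period by auto
    moreover have "cis (s + 2 * pi * n) = cis s"
      by (simp add: cis_mult[symmetric])
    ultimately show ?case using elim(1) by blast
  qed
qed

end

theorem theorem5p1:
  fixes c :: real and N :: nat and \<psi> :: "complex \<Rightarrow> real"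
  assumes "c > 0" and "N > 0"
    and "alternating_step_function c N \<psi>"
  shows "\<exists>\<omega>. finite_blaschke_product N \<omega> \<and>
           (AE s in lborel. \<psi> (cis s) =
              2 * c / pi * Arg ((1 + \<omega> (cis s)) / (1 - \<omega> (cis s))))"
proof -
  obtain t :: "nat \<Rightarrow> real" where "\<forall>j<2*N. t j < t (Suc j)" "t (2*N) = t 0 + 2*pi"
    and \<psi>_on_arcs: "AE s in lborel. \<forall>j<2*N. t j < s \<and> s < t (Suc j) \<longrightarrow> \<psi> (cis s) = (-1) ^ j * c"
    using assms(3) unfolding alternating_step_function_def by blast
  then interpret circle_partition t N using assms(2) by unfold_locales auto
  obtain \<omega> where "finite_blaschke_product N \<omega>" and \<omega>_Arg:
    "\<And>s j. j < 2 * N \<Longrightarrow> t j < s \<Longrightarrow> s < t (Suc j) \<Longrightarrow>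
        Arg ((1 + \<omega> (cis s)) / (1 - \<omega> (cis s))) = (-1) ^ j * (pi / 2)"
    using exists_blaschke_product_Arg by blast
  moreover have "AE s in lborel. \<psi> (cis s) = 2 * c / pi * Arg ((1 + \<omega> (cis s)) / (1 - \<omega> (cis s)))"
    using AE_in_arc[OF \<psi>_on_arcs]
  proof eventually_elim
    case (elim s)
    then obtain s' j where "j < 2 * N" "t j < s'" "s' < t (Suc j)" "cis s' = cis s"
      and "\<psi> (cis s') = (-1) ^ j * c" by blast
    thus ?case using \<omega>_Arg[of j s'] by (simp add: field_simps)
  qed
  ultimately show ?thesis by blast
qed

end
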